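(* Let $S\subseteq\mathbb{R}^n$ be a closed set, $H$ an affine hyperplane, and $C\subseteq\mathbb{R}^n$ a convex $S$-free set. Assume $C=\{x\in\mathbb{R}^n : \alpha^\mathsf{T} x\le\beta\ \forall(\alpha,\beta)\in\Gamma\}$ for some family $\Gamma$ of inequalities, and that for every $(\alpha,\beta)\in\Gamma$ there is a point $x\in S\cap C\cap H$ that exposes $(\alpha,\beta)$ with respect to $C$. Then $C$ is maximal $S$-free with respect to $H$.
   Context: A convex set $C$ is $S$-free if $\operatorname{int}(C)\cap S=\emptyset$. Given an affine hyperplane $H$, a closed convex $C$ is $S$-free with respect to $H$ if the interior of $C\cap H$ relative to $H$ does not meet $S\cap H$; it is maximal $S$-free with respect to $H$ if for every closed convex $C'\supseteq C$ that is $S$-free with respect to $H$, $C'\cap H\subseteq C\cap H$. An inequality $\alpha^\mathsf{T} x\le\beta$ (written $(\alpha,\beta)$) is valid for $C$ if it holds on $C$; it is non-trivial if $\alpha\neq0$. A point $x_0$ exposes a valid inequality $(\alpha,\beta)$ with respect to convex $C$ if $\alpha^\mathsf{T} x_0=\beta$ and for every non-trivial valid inequality $\gamma^\mathsf{T} x\le\delta$ for $C$ with $\gamma^\mathsf{T} x_0=\delta$ there is $\mu>0$ with $\gamma=\mu\alpha$ and $\delta=\mu\beta$. *)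

theory Defs
  imports "HOL-Analysis.Analysis"
begin

definition affine_hyperplane :: "'a::euclidean_space set \<Rightarrow> bool" where
  "affine_hyperplane H \<longleftrightarrow> (\<exists>a b. a \<noteq> 0 \<and> H = {x. a \<bullet> x = b})"

definition S_free :: "'a::euclidean_space set \<Rightarrow> 'a set \<Rightarrow> bool" where
  "S_free S C \<longleftrightarrow> interior C \<inter> S = {}"

definition S_free_wrt :: "'a::euclidean_space set \<Rightarrow> 'a set \<Rightarrow> 'a set \<Rightarrow> bool" where
  "S_free_wrt S H C \<longleftrightarrow> ((top_of_set H) interior_of (C \<inter> H)) \<inter> (S \<inter> H) = {}"

definition maximal_S_free_wrt :: "'a::euclidean_space set \<Rightarrow> 'a set \<Rightarrow> 'a set \<Rightarrow> bool" where
  "maximal_S_free_wrt S H C \<longleftrightarrow> closed C \<and> convex C \<and>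
     (\<forall>C'. closed C' \<and> convex C' \<and> C \<subseteq> C' \<and> S_free_wrt S H C' \<longrightarrow> C' \<inter> H \<subseteq> C \<inter> H)"

definition valid_ineq :: "'a::euclidean_space set \<Rightarrow> 'a \<Rightarrow> real \<Rightarrow> bool" where
  "valid_ineq C \<alpha> \<beta> \<longleftrightarrow> (\<forall>x\<in>C. \<alpha> \<bullet> x \<le> \<beta>)"

definition exposes :: "'a::euclidean_space set \<Rightarrow> 'a \<Rightarrow> 'a \<Rightarrow> real \<Rightarrow> bool" where
  "exposes C x0 \<alpha> \<beta> \<longleftrightarrow> \<alpha> \<bullet> x0 = \<beta> \<and>
     (\<forall>\<gamma> \<delta>. \<gamma> \<noteq> 0 \<and> valid_ineq C \<gamma> \<delta> \<and> \<gamma> \<bullet> x0 = \<delta> \<longrightarrow>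
        (\<exists>\<mu>>0. \<gamma> = \<mu> *\<^sub>R \<alpha> \<and> \<delta> = \<mu> * \<beta>))"

end

theory Submission
  imports Defs
begin

text \<open>
  Let \<open>C' \<supseteq> C\<close> be closed, convex and \<open>S\<close>-free with respect to \<open>H\<close>, and suppose some
  \<open>y \<in> C' \<inter> H\<close> violates an inequality \<open>(\<alpha>, \<beta>) \<in> \<Gamma>\<close>. If the point \<open>x \<in> S \<inter> C \<inter> H\<close>
  exposing \<open>(\<alpha>, \<beta>)\<close> were on the boundary of \<open>C'\<close>, a supporting hyperplane of \<open>C'\<close> at \<open>x\<close>
  would be valid for \<open>C\<close> and tight at \<open>x\<close>, hence a positive multiple of \<open>(\<alpha>, \<beta>)\<close>, and \<open>y\<close>
  would satisfy \<open>\<alpha>\<^sup>T y \<le> \<beta>\<close>. So \<open>x\<close> lies in the interior of \<open>C'\<close>, hence in the interior of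
  \<open>C' \<inter> H\<close> relative to \<open>H\<close>, and \<open>x \<in> S\<close> contradicts \<open>S\<close>-freeness of \<open>C'\<close>.
\<close>

lemma closed_halfspace_intersection:
  fixes \<Gamma> :: "('a::euclidean_space \<times> real) set"
  shows "closed {x. \<forall>(\<alpha>, \<beta>)\<in>\<Gamma>. \<alpha> \<bullet> x \<le> \<beta>}"
proof -
  have "{x. \<forall>(\<alpha>, \<beta>)\<in>\<Gamma>. \<alpha> \<bullet> x \<le> \<beta>} = (\<Inter>(\<alpha>, \<beta>)\<in>\<Gamma>. {x. \<alpha> \<bullet> x \<le> \<beta>})"
    by auto
  then show ?thesis
    by (auto intro!: closed_INT closed_halfspace_le)
qed

lemma convex_supporting_hyperplane_at_non_interior_point:
  fixes C :: "'a::euclidean_space set"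
  assumes "convex C" "x \<in> C" "x \<notin> interior C"
  obtains g where "g \<noteq> 0" "\<forall>z\<in>C. g \<bullet> z \<le> g \<bullet> x"
proof (cases "interior C = {}")
  case True
  then obtain a b where "a \<noteq> 0" "C \<subseteq> {z. a \<bullet> z = b}"
    using empty_interior_subset_hyperplane[OF \<open>convex C\<close>] by metis
  moreover from this(2) \<open>x \<in> C\<close> have "\<forall>z\<in>C. a \<bullet> z \<le> a \<bullet> x"
    by (metis (mono_tags) mem_Collect_eq order_refl subsetD)
  ultimately show ?thesis
    using that by blast
next
  case False
  then have "x \<notin> rel_interior C"
    using \<open>x \<notin> interior C\<close> rel_interior_nonempty_interior by blast
  then obtain a where "a \<noteq> 0" "\<And>z. z \<in> closure C \<Longrightarrow> a \<bullet> x \<le> a \<bullet> z"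
    using supporting_hyperplane_relative_frontier[OF \<open>convex C\<close>] \<open>x \<in> C\<close> closure_subset
    by (metis subsetD)
  then show ?thesis
    using that[of "-a"] closure_subset by auto
qed

lemma exposes_valid_ineq_convex_superset:
  fixes C C' :: "'a::euclidean_space set"
  assumes "exposes C x \<alpha> \<beta>" "C \<subseteq> C'" "convex C'" "x \<in> C'" "x \<notin> interior C'"
  shows "valid_ineq C' \<alpha> \<beta>"
proof -
  obtain g where g: "g \<noteq> 0" "\<forall>z\<in>C'. g \<bullet> z \<le> g \<bullet> x"
    using convex_supporting_hyperplane_at_non_interior_point assms(3-5) by blast
  then have "valid_ineq C g (g \<bullet> x)"
    using \<open>C \<subseteq> C'\<close> unfolding valid_ineq_def by auto
  with g(1) \<open>exposes C x \<alpha> \<beta>\<close> obtain \<mu> where \<mu>: "\<mu> > 0" "g = \<mu> *\<^sub>R \<alpha>" "g \<bullet> x = \<mu> * \<beta>"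
    unfolding exposes_def by blast
  have "\<alpha> \<bullet> z \<le> \<beta>" if "z \<in> C'" for z
  proof -
    have "\<mu> * (\<alpha> \<bullet> z) \<le> \<mu> * \<beta>"
      using g(2) \<mu> that by auto
    then show ?thesis
      using \<open>\<mu> > 0\<close> by simp
  qed
  then show ?thesis
    unfolding valid_ineq_def by blast
qed

lemma Int_interior_subset_interior_of_section:
  "H \<inter> interior C \<subseteq> top_of_set H interior_of (C \<inter> H)"
proof -
  have "H \<inter> interior C \<subseteq> top_of_set H interior_of C"
    using interior_of_subtopology_subset[of H euclidean C] by simp
  moreover have "top_of_set H interior_of H = H"
    using interior_of_topspace[of "top_of_set H"] by simp
  ultimately show ?thesis
    by (simp add: interior_of_Int)
qed

theorem theorem3:
  fixes S H C :: "'a::euclidean_space set" and \<Gamma> :: "('a \<times> real) set"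
  assumes "closed S"
    and "affine_hyperplane H"
    and "convex C"
    and "S_free S C"
    and "C = {x. \<forall>(\<alpha>, \<beta>)\<in>\<Gamma>. \<alpha> \<bullet> x \<le> \<beta>}"
    and "\<forall>(\<alpha>, \<beta>)\<in>\<Gamma>. \<exists>x\<in>S \<inter> C \<inter> H. exposes C x \<alpha> \<beta>"
  shows "maximal_S_free_wrt S H C"
proof -
  have "C' \<inter> H \<subseteq> C"
    if C': "convex C'" "C \<subseteq> C'" "S_free_wrt S H C'" for C'
  proof
    fix y assume y: "y \<in> C' \<inter> H"
    show "y \<in> C"
    proof (rule ccontr)
      assume "y \<notin> C"
      with assms(5) obtain \<alpha> \<beta> where "(\<alpha>, \<beta>) \<in> \<Gamma>" "\<alpha> \<bullet> y > \<beta>" by auto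
      with assms(6) obtain x where x: "x \<in> S" "x \<in> C" "x \<in> H" "exposes C x \<alpha> \<beta>" by blast
      have "\<not> valid_ineq C' \<alpha> \<beta>"
        using y \<open>\<alpha> \<bullet> y > \<beta>\<close> unfolding valid_ineq_def by force
      then have "x \<in> interior C'"
        using exposes_valid_ineq_convex_superset x C' by blast
      then have "x \<in> top_of_set H interior_of (C' \<inter> H)"
        using Int_interior_subset_interior_of_section \<open>x \<in> H\<close> by blast
      with x C'(3) show False
        unfolding S_free_wrt_def by blast
    qed
  qed
  then show ?thesis
    using assms(3,5) closed_halfspace_intersection unfolding maximal_S_free_wrt_def by blast
qed

end
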